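(* Let $\Sigma=\{A,C,G,T\}$, let $\ell\ge 1$ and $M\ge 1$ be integers, and for every ordered pair $(b,a)\in\Sigma^2$ with $a\neq b$ fix integers $1\le t_{b\to a}^{(1)}<t_{b\to a}^{(2)}<\dots<t_{b\to a}^{(\ell)}\le M$. Let $G=(V,E,L)$ be the directed labeled graph with vertex set $V=\Sigma$ in which, for every $a,b\in\Sigma$ with $a\neq b$, there are $\ell$ parallel edges directed from $b$ to $a$, the $i$-th of which ($i\in\{1,\dots,\ell\}$) is labeled by the word $a^{t_{b\to a}^{(i)}}$ (the letter $a$ repeated $t_{b\to a}^{(i)}$ times); $G$ has no other edges. Then $G$ is lossless. Moreover, if $G'$ is the ordinary graph obtained from $G$ by replacing each edge $v\xrightarrow{w_1\cdots w_m}u$ ($w_j\in\Sigma$) with a path $v\xrightarrow{w_1}v_1\xrightarrow{w_2}\cdots\xrightarrow{w_{m-1}}v_{m-1}\xrightarrow{w_m}u$ through new auxiliary vertices $v_1,\dots,v_{m-1}$, then $\mathsf{cap}(S(G))=\log_2\lambda(A_{G'})$, where $A_{G'}$ is the adjacency matrix of $G'$ and $\lambda(A_{G'})$ its spectral radius.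
   Context: A finite directed labeled graph $G=(V,E,L)$ has a finite vertex set $V$, a finite multiset of directed edges $E$ (parallel edges allowed), and a labeling $L:E\to\Sigma^+$ of edges by nonempty words. A path $\gamma=e_1\cdots e_m$ generates the word $L(\gamma)=L(e_1)\cdots L(e_m)$ (the empty path generates the empty word). $G$ is ordinary if every edge label has length $1$. $G$ is lossless if for any vertices $v_1,v_2$ (possibly equal) and any word $w\in\Sigma^*$ there is at most one path from $v_1$ to $v_2$ generating $w$. The constrained system of $G$ is $S(G)=\{L(\gamma):\gamma\text{ a finite path in }G\}$, and its capacity is $\mathsf{cap}(S(G))=\limsup_{n\to\infty}\frac1n\log_2|S(G)\cap\Sigma^n|$. *)

theory Defs
  imports "Jordan_Normal_Form.Spectral_Radius" "HOL-Library.Extended_Real" "HOL-Library.Liminf_Limsup"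
begin

datatype dna = A | C | G | T

text \<open>Finite directed labeled graph; edges are identified by names (so parallel
edges are allowed), each with a source, a target and a label word.\<close>
record ('v, 'e, 'a) lgraph =
  verts :: "'v set"
  edges :: "'e set"
  src   :: "'e \<Rightarrow> 'v"
  tgt   :: "'e \<Rightarrow> 'v"
  lab   :: "'e \<Rightarrow> 'a list"

definition wf_lgraph :: "('v, 'e, 'a) lgraph \<Rightarrow> bool" where
  "wf_lgraph Gr \<longleftrightarrow> finite (verts Gr) \<and> finite (edges Gr) \<and>
     (\<forall>e\<in>edges Gr. src Gr e \<in> verts Gr \<and> tgt Gr e \<in> verts Gr \<and> lab Gr e \<noteq> [])"

definition is_path :: "('v, 'e, 'a) lgraph \<Rightarrow> 'v \<Rightarrow> 'v \<Rightarrow> 'e list \<Rightarrow> bool" where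
  "is_path Gr v1 v2 es \<longleftrightarrow> v1 \<in> verts Gr \<and> v2 \<in> verts Gr \<and> set es \<subseteq> edges Gr \<and>
     (if es = [] then v1 = v2
      else src Gr (hd es) = v1 \<and> tgt Gr (last es) = v2 \<and>
           (\<forall>i. Suc i < length es \<longrightarrow> tgt Gr (es ! i) = src Gr (es ! Suc i)))"

definition path_word :: "('v, 'e, 'a) lgraph \<Rightarrow> 'e list \<Rightarrow> 'a list" where
  "path_word Gr es = concat (map (lab Gr) es)"

definition ordinary :: "('v, 'e, 'a) lgraph \<Rightarrow> bool" where
  "ordinary Gr \<longleftrightarrow> (\<forall>e\<in>edges Gr. length (lab Gr e) = 1)"

definition lossless :: "('v, 'e, 'a) lgraph \<Rightarrow> bool" where
  "lossless Gr \<longleftrightarrow> (\<forall>v1 v2 es1 es2. is_path Gr v1 v2 es1 \<longrightarrow> is_path Gr v1 v2 es2 \<longrightarrow>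
      path_word Gr es1 = path_word Gr es2 \<longrightarrow> es1 = es2)"

definition constrained_system :: "('v, 'e, 'a) lgraph \<Rightarrow> 'a list set" where
  "constrained_system Gr = {path_word Gr es | es. \<exists>v1 v2. is_path Gr v1 v2 es}"

definition capacity :: "'a list set \<Rightarrow> ereal" where
  "capacity S = limsup (\<lambda>n. let c = card {w \<in> S. length w = n} in
       if c = 0 then -\<infinity> else ereal (log 2 (real c) / real n))"

text \<open>The ordinary graph G' obtained by subdividing every edge of label length m
into a path of m edges through m-1 new auxiliary vertices (Inr (e,j), 1 \<le> j < m).\<close>
definition expand :: "('v, 'e, 'a) lgraph \<Rightarrow> ('v + ('e \<times> nat), 'e \<times> nat, 'a) lgraph" where
  "expand Gr = \<lparr>
     verts = Inl ` verts Gr \<union> {Inr (e, j) | e j. e \<in> edges Gr \<and> 1 \<le> j \<and> j < length (lab Gr e)},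
     edges = {(e, j) | e j. e \<in> edges Gr \<and> j < length (lab Gr e)},
     src = (\<lambda>(e, j). if j = 0 then Inl (src Gr e) else Inr (e, j)),
     tgt = (\<lambda>(e, j). if Suc j = length (lab Gr e) then Inl (tgt Gr e) else Inr (e, Suc j)),
     lab = (\<lambda>(e, j). [lab Gr e ! j]) \<rparr>"

definition adj_mat :: "('v, 'e, 'a) lgraph \<Rightarrow> 'v list \<Rightarrow> complex mat" where
  "adj_mat Gr vs = mat (length vs) (length vs)
     (\<lambda>(i, j). of_nat (card {e \<in> edges Gr. src Gr e = vs ! i \<and> tgt Gr e = vs ! j}))"

text \<open>Spectral radius of the adjacency matrix (independent of the enumeration).\<close>
definition graph_spectral_radius :: "('v, 'e, 'a) lgraph \<Rightarrow> real" where
  "graph_spectral_radius Gr =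
     spectral_radius (adj_mat Gr (SOME vs. distinct vs \<and> set vs = verts Gr))"

definition dna_graph :: "nat \<Rightarrow> (dna \<Rightarrow> dna \<Rightarrow> nat \<Rightarrow> nat) \<Rightarrow> (dna, dna \<times> dna \<times> nat, dna) lgraph" where
  "dna_graph l t = \<lparr>
     verts = UNIV,
     edges = {(b, a, i) | b a i. a \<noteq> b \<and> 1 \<le> i \<and> i \<le> l},
     src = (\<lambda>(b, a, i). b),
     tgt = (\<lambda>(b, a, i). a),
     lab = (\<lambda>(b, a, i). replicate (t b a i) a) \<rparr>"

end

(*
  The word of a path leaving a vertex b begins with a maximal run a^t of a single letter
  a \<noteq> b (the next edge leaves a and therefore writes a different letter).  The letter a
  and the run length t determine the first edge, because i \<mapsto> t_{b\<rightarrow>a}^(i) is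
  injective; induction along the path shows that the graph is lossless.

  For any lossless graph G with labels of length at most M, the entries of the n-th power
  of the adjacency matrix of the subdivided graph G' count its paths of length n.  Every
  word of length n is read along such a path, so the number of words is at most C r^n for
  each r > \<lambda>(A_G').  Conversely, a path of G' extends by at most M steps at either end to a
  path between original vertices, which is determined by its word; on a suitable row the
  entries of A_G'^n sum to at least \<lambda>^n, whence \<lambda>^n \<le> |V'| |S \<inter> \<Sigma>^k| for some
  k \<in> [n, n + 2M].  The two bounds force the limsup in the capacity to be log2 \<lambda>.
*)
theory Submission
  imports Defs
begin

section \<open>Growth of matrix powers\<close>

lemma smult_pow_mat:
  assumes X: "X \<in> carrier_mat n n"
  shows "(c \<cdot>\<^sub>m X) ^\<^sub>m k = c ^ k \<cdot>\<^sub>m (X ^\<^sub>m k :: 'a::comm_ring_1 mat)"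
proof (induction k)
  case 0
  then show ?case using X by (auto intro!: eq_matI)
next
  case (Suc k)
  have "(c \<cdot>\<^sub>m X) ^\<^sub>m Suc k = (c ^ k \<cdot>\<^sub>m X ^\<^sub>m k) * (c \<cdot>\<^sub>m X)"
    using Suc by simp
  also have "\<dots> = c ^ k \<cdot>\<^sub>m (X ^\<^sub>m k * (c \<cdot>\<^sub>m X))"
    using X by (intro mult_smult_assoc_mat) auto
  also have "X ^\<^sub>m k * (c \<cdot>\<^sub>m X) = c \<cdot>\<^sub>m (X ^\<^sub>m k * X)"
    using X by (intro mult_smult_distrib) auto
  finally show ?case by (auto intro!: eq_matI simp: algebra_simps)
qed

lemma eigenvalue_smult_mat:
  assumes X: "X \<in> carrier_mat n n" and ev: "eigenvalue X (\<mu> :: 'a::comm_ring_1)"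
  shows "eigenvalue (c \<cdot>\<^sub>m X) (c * \<mu>)"
proof -
  obtain v where v: "v \<in> carrier_vec n" "v \<noteq> 0\<^sub>v n" "X *\<^sub>v v = \<mu> \<cdot>\<^sub>v v"
    using ev X unfolding eigenvalue_def eigenvector_def by auto
  have "(c \<cdot>\<^sub>m X) *\<^sub>v v = c \<cdot>\<^sub>v (X *\<^sub>v v)"
    using X v(1) by (intro eq_vecI) (auto simp: scalar_prod_def sum_distrib_left algebra_simps)
  then have "(c \<cdot>\<^sub>m X) *\<^sub>v v = (c * \<mu>) \<cdot>\<^sub>v v"
    using v(3) by (simp add: smult_smult_assoc)
  then show ?thesis
    using X v unfolding eigenvalue_def eigenvector_def by auto
qed

lemma spectral_radius_smult_less_1:
  assumes X: "(X :: complex mat) \<in> carrier_mat n n" and n: "0 < n"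
    and r: "spectral_radius X < r" and r0: "0 < r"
  shows "spectral_radius (complex_of_real (1 / r) \<cdot>\<^sub>m X) < 1"
proof -
  define B where "B = complex_of_real (1 / r) \<cdot>\<^sub>m X"
  have B: "B \<in> carrier_mat n n" using X by (simp add: B_def)
  have X_B: "X = complex_of_real r \<cdot>\<^sub>m B" using X r0 unfolding B_def by (auto intro!: eq_matI)
  obtain \<mu> where \<mu>: "\<mu> \<in> spectrum B" "spectral_radius B = norm \<mu>"
    using spectral_radius_mem_max(1)[OF B n] by auto
  have "complex_of_real r * \<mu> \<in> spectrum X"
    using eigenvalue_smult_mat[OF B] \<mu>(1) X_B by (simp add: spectrum_def)
  then have "norm (complex_of_real r * \<mu>) \<le> spectral_radius X"
    using spectral_radius_mem_max(2)[OF X n] by blast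
  moreover have "norm (complex_of_real r * \<mu>) = r * norm \<mu>"
    using r0 by (simp add: norm_mult)
  ultimately have "r * norm \<mu> < r * 1"
    using r by linarith
  then show ?thesis
    using r0 \<mu>(2) mult_less_cancel_left_pos unfolding B_def by metis
qed

text \<open>Rescaling by \<open>1/r\<close> brings the spectral radius below 1, where the Jordan normal
  form bounds the powers.\<close>
lemma spectral_radius_pow_norm_bound:
  assumes X: "(X :: complex mat) \<in> carrier_mat n n" and r: "spectral_radius X < r"
  shows "\<exists>c. \<forall>k. norm_bound (X ^\<^sub>m k) (c * r ^ k)"
proof (cases "n = 0")
  case True
  then show ?thesis using X by (auto simp: norm_bound_def)
next
  case False
  then have n: "0 < n" by simp
  have r0: "0 < r"
    using spectral_radius_mem_max(1)[OF X n] r by (auto intro: le_less_trans[OF norm_ge_zero])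
  define B where "B = complex_of_real (1 / r) \<cdot>\<^sub>m X"
  have B: "B \<in> carrier_mat n n" using X by (simp add: B_def)
  have X_B: "X = complex_of_real r \<cdot>\<^sub>m B" using X r0 unfolding B_def by (auto intro!: eq_matI)
  have "spectral_radius B < 1"
    unfolding B_def by (rule spectral_radius_smult_less_1[OF X n r r0])
  then obtain c where c: "\<And>k. norm_bound (B ^\<^sub>m k) c"
    using spectral_radius_jnf_norm_bound_less_1_upper_triangular[OF B] by auto
  have "norm_bound (X ^\<^sub>m k) (c * r ^ k)" for k
  proof
    fix i j assume ij: "i < dim_row (X ^\<^sub>m k)" "j < dim_col (X ^\<^sub>m k)"
    have ij': "i < n" "j < n" using ij X by (auto split: if_splits)
    then have "(X ^\<^sub>m k) $$ (i, j) = complex_of_real r ^ k * (B ^\<^sub>m k) $$ (i, j)"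
      using B by (subst X_B) (simp add: smult_pow_mat[OF B])
    then have "norm ((X ^\<^sub>m k) $$ (i, j)) = r ^ k * norm ((B ^\<^sub>m k) $$ (i, j))"
      using r0 by (simp add: norm_mult norm_power)
    also have "\<dots> \<le> r ^ k * c"
      using c[of k] ij' B r0 unfolding norm_bound_def by (intro mult_left_mono) auto
    finally show "norm ((X ^\<^sub>m k) $$ (i, j)) \<le> c * r ^ k" by (simp add: mult.commute)
  qed
  then show ?thesis by blast
qed

text \<open>Use the row on which an eigenvector for an eigenvalue of maximal modulus attains its
  largest entry.\<close>
lemma spectral_radius_pow_le_row_sum:
  assumes X: "(X :: complex mat) \<in> carrier_mat n n" and n: "0 < n"
  shows "\<exists>i<n. \<forall>k. spectral_radius X ^ k \<le> (\<Sum>j<n. norm ((X ^\<^sub>m k) $$ (i, j)))"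
proof -
  obtain z where "z \<in> spectrum X" and \<rho>: "spectral_radius X = norm z"
    using spectral_radius_mem_max(1)[OF X n] by auto
  then obtain v where ev: "eigenvector X v z" unfolding spectrum_def eigenvalue_def by auto
  have v: "v \<in> carrier_vec n" "v \<noteq> 0\<^sub>v n" using ev X unfolding eigenvector_def by auto
  have "finite ((\<lambda>j. norm (v $ j)) ` {..<n})" "(\<lambda>j. norm (v $ j)) ` {..<n} \<noteq> {}"
    using n by auto
  from Max_in[OF this] obtain i where i: "i < n" "norm (v $ i) = Max ((\<lambda>j. norm (v $ j)) ` {..<n})"
    by auto
  have max: "norm (v $ j) \<le> norm (v $ i)" if "j < n" for j
    using that i(2) by simp
  have "0 < norm (v $ i)"
  proof (rule ccontr)
    assume "\<not> 0 < norm (v $ i)"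
    then have "v $ j = 0" if "j < n" for j
      using max[OF that] by (meson norm_le_zero_iff not_less order_trans)
    then have "v = 0\<^sub>v n"
      using v(1) by (intro eq_vecI) auto
    then show False using v(2) by simp
  qed
  moreover have "norm z ^ k * norm (v $ i) \<le> (\<Sum>j<n. norm ((X ^\<^sub>m k) $$ (i, j))) * norm (v $ i)"
    for k
  proof -
    have "z ^ k * v $ i = (X ^\<^sub>m k *\<^sub>v v) $ i"
      using eigenvector_pow[OF X ev] v(1) i(1) by simp
    also have "\<dots> = (\<Sum>j<n. (X ^\<^sub>m k) $$ (i, j) * v $ j)"
      using X v(1) i(1) by (simp add: scalar_prod_def lessThan_atLeast0)
    finally have "norm z ^ k * norm (v $ i) = norm (\<Sum>j<n. (X ^\<^sub>m k) $$ (i, j) * v $ j)"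
      by (metis norm_mult norm_power)
    also have "\<dots> \<le> (\<Sum>j<n. norm ((X ^\<^sub>m k) $$ (i, j)) * norm (v $ j))"
      by (rule order_trans[OF norm_sum]) (simp add: norm_mult)
    also have "\<dots> \<le> (\<Sum>j<n. norm ((X ^\<^sub>m k) $$ (i, j)) * norm (v $ i))"
      by (intro sum_mono mult_left_mono max) auto
    finally show ?thesis by (simp add: sum_distrib_right)
  qed
  ultimately show ?thesis using i(1) \<rho> by auto
qed

section \<open>Paths and losslessness\<close>

lemma is_path_Nil [simp]: "is_path Gr u v [] \<longleftrightarrow> u \<in> verts Gr \<and> u = v"
  unfolding is_path_def by auto

lemma adjacent_pairs_Cons:
  "(\<forall>i. Suc i < length (x # xs) \<longrightarrow> R ((x # xs) ! i) ((x # xs) ! Suc i)) \<longleftrightarrow>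
     (xs \<noteq> [] \<longrightarrow> R x (hd xs)) \<and> (\<forall>i. Suc i < length xs \<longrightarrow> R (xs ! i) (xs ! Suc i))"
  by (cases xs) (simp_all add: All_less_Suc2)

lemma is_path_Cons:
  assumes "wf_lgraph Gr"
  shows "is_path Gr u v (e # es) \<longleftrightarrow> e \<in> edges Gr \<and> src Gr e = u \<and> is_path Gr (tgt Gr e) v es"
  using assms unfolding is_path_def adjacent_pairs_Cons[where R = "\<lambda>e e'. tgt Gr e = src Gr e'"]
  by (cases es) (auto simp: wf_lgraph_def hd_conv_nth last_conv_nth)

lemma is_path_append:
  assumes wf: "wf_lgraph Gr"
  shows "is_path Gr u v (xs @ ys) \<longleftrightarrow> (\<exists>w. is_path Gr u w xs \<and> is_path Gr w v ys)"
proof (induction xs arbitrary: u)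
  case Nil
  then show ?case
    by (cases ys) (auto simp: is_path_Cons[OF wf] wf[unfolded wf_lgraph_def])
next
  case (Cons x xs)
  then show ?case by (auto simp: is_path_Cons[OF wf])
qed

lemma is_path_verts: "is_path Gr u v es \<Longrightarrow> u \<in> verts Gr \<and> v \<in> verts Gr"
  unfolding is_path_def by auto

lemma path_word_Nil [simp]: "path_word Gr [] = []"
  and path_word_Cons [simp]: "path_word Gr (e # es) = lab Gr e @ path_word Gr es"
  and path_word_append [simp]: "path_word Gr (xs @ ys) = path_word Gr xs @ path_word Gr ys"
  unfolding path_word_def by auto

lemma length_lab_ge_1: "wf_lgraph Gr \<Longrightarrow> e \<in> edges Gr \<Longrightarrow> 1 \<le> length (lab Gr e)"
  unfolding wf_lgraph_def by (auto simp: Suc_le_eq)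

lemma length_path_word_ge:
  "wf_lgraph Gr \<Longrightarrow> set es \<subseteq> edges Gr \<Longrightarrow> length es \<le> length (path_word Gr es)"
  by (induction es) (auto dest: length_lab_ge_1)

lemma losslessI:
  assumes wf: "wf_lgraph Gr"
    and first_edge: "\<And>v x y e1 e2 es1 es2. is_path Gr v x (e1 # es1) \<Longrightarrow> is_path Gr v y (e2 # es2) \<Longrightarrow>
      path_word Gr (e1 # es1) = path_word Gr (e2 # es2) \<Longrightarrow> e1 = e2"
  shows "lossless Gr"
proof -
  have "es1 = es2"
    if "is_path Gr v x es1" "is_path Gr v y es2" "path_word Gr es1 = path_word Gr es2"
    for v x y es1 es2
    using that
  proof (induction es1 arbitrary: v es2)
    case Nil
    with wf show ?case by (cases es2) (auto simp: is_path_Cons[OF wf] wf_lgraph_def)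
  next
    case (Cons e1 es1)
    note IH = Cons.IH and prems = Cons.prems
    show ?case
    proof (cases es2)
      case Nil
      with prems wf show ?thesis by (auto simp: is_path_Cons[OF wf] wf_lgraph_def)
    next
      case (Cons e2 es2')
      with prems(2,3) have "is_path Gr v y (e2 # es2')"
        and "path_word Gr (e1 # es1) = path_word Gr (e2 # es2')"
        by simp_all
      then have "e1 = e2" by (rule first_edge[OF prems(1)])
      with prems IH Cons show ?thesis by (auto simp: is_path_Cons[OF wf])
    qed
  qed
  then show ?thesis unfolding lossless_def by blast
qed

section \<open>The subdivided graph\<close>

lemma wf_expand:
  assumes wf: "wf_lgraph Gr"
  shows "wf_lgraph (expand Gr)"
proof -
  have E: "{(e, j) | e j. e \<in> edges Gr \<and> j < length (lab Gr e)} = Sigma (edges Gr) (\<lambda>e. {..<length (lab Gr e)})"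
    by auto
  have "{Inr (e, j) | e j. e \<in> edges Gr \<and> 1 \<le> j \<and> j < length (lab Gr e)} \<subseteq>
      Inr ` Sigma (edges Gr) (\<lambda>e. {..<length (lab Gr e)})"
    by auto
  moreover have "finite (Inr ` Sigma (edges Gr) (\<lambda>e. {..<length (lab Gr e)}))"
    using wf unfolding wf_lgraph_def by auto
  ultimately have "finite {Inr (e, j) | e j. e \<in> edges Gr \<and> 1 \<le> j \<and> j < length (lab Gr e)}"
    by (rule finite_subset)
  with wf show ?thesis
    unfolding wf_lgraph_def expand_def E by auto
qed

definition subdiv_vertex :: "('v, 'e, 'a) lgraph \<Rightarrow> 'e \<Rightarrow> nat \<Rightarrow> 'v + 'e \<times> nat" where
  "subdiv_vertex Gr e j =
     (if j = 0 then Inl (src Gr e) else if j = length (lab Gr e) then Inl (tgt Gr e) else Inr (e, j))"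

definition subdiv_edge :: "('v, 'e, 'a) lgraph \<Rightarrow> 'e \<Rightarrow> ('e \<times> nat) list" where
  "subdiv_edge Gr e = map (Pair e) [0..<length (lab Gr e)]"

definition subdiv_path :: "('v, 'e, 'a) lgraph \<Rightarrow> 'e list \<Rightarrow> ('e \<times> nat) list" where
  "subdiv_path Gr es = concat (map (subdiv_edge Gr) es)"

lemma path_word_expand: "path_word (expand Gr) p = map (\<lambda>(e, j). lab Gr e ! j) p"
  unfolding path_word_def expand_def by (induction p) auto

lemma length_path_word_expand [simp]: "length (path_word (expand Gr) p) = length p"
  by (simp add: path_word_expand)

lemma subdiv_vertex_in_verts:
  "wf_lgraph Gr \<Longrightarrow> e \<in> edges Gr \<Longrightarrow> j \<le> length (lab Gr e) \<Longrightarrow> subdiv_vertex Gr e j \<in> verts (expand Gr)"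
  unfolding subdiv_vertex_def expand_def wf_lgraph_def by auto

lemma is_path_expand_segment:
  assumes wf: "wf_lgraph Gr" and e: "e \<in> edges Gr"
  shows "j \<le> k \<Longrightarrow> k \<le> length (lab Gr e) \<Longrightarrow>
    is_path (expand Gr) (subdiv_vertex Gr e j) (subdiv_vertex Gr e k) (map (Pair e) [j..<k])"
proof (induction k)
  case 0
  then show ?case using subdiv_vertex_in_verts[OF wf e] by simp
next
  case (Suc k)
  show ?case
  proof (cases "j = Suc k")
    case True
    then show ?thesis using subdiv_vertex_in_verts[OF wf e] Suc by simp
  next
    case False
    then have "is_path (expand Gr) (subdiv_vertex Gr e j) (subdiv_vertex Gr e k) (map (Pair e) [j..<k])"
      using Suc by simp
    moreover have "is_path (expand Gr) (subdiv_vertex Gr e k) (subdiv_vertex Gr e (Suc k)) [(e, k)]"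
      using Suc e subdiv_vertex_in_verts[OF wf e, of "Suc k"]
      by (simp add: is_path_Cons[OF wf_expand[OF wf]]) (auto simp: expand_def subdiv_vertex_def)
    ultimately show ?thesis
      using False Suc by (auto simp: is_path_append[OF wf_expand[OF wf]])
  qed
qed

lemma is_path_subdiv_edge:
  assumes wf: "wf_lgraph Gr" and e: "e \<in> edges Gr"
  shows "is_path (expand Gr) (Inl (src Gr e)) (Inl (tgt Gr e)) (subdiv_edge Gr e)"
proof -
  have "subdiv_vertex Gr e 0 = Inl (src Gr e)"
    and "subdiv_vertex Gr e (length (lab Gr e)) = Inl (tgt Gr e)"
    using length_lab_ge_1[OF wf e] by (auto simp: subdiv_vertex_def)
  then show ?thesis
    using is_path_expand_segment[OF wf e, of 0 "length (lab Gr e)"] by (simp add: subdiv_edge_def)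
qed

lemma path_word_subdiv_edge: "path_word (expand Gr) (subdiv_edge Gr e) = lab Gr e"
  unfolding subdiv_edge_def path_word_expand by (simp add: map_nth comp_def)

lemma is_path_subdiv_path:
  assumes wf: "wf_lgraph Gr"
  shows "is_path Gr u v es \<Longrightarrow> is_path (expand Gr) (Inl u) (Inl v) (subdiv_path Gr es)"
proof (induction es arbitrary: u)
  case Nil
  then show ?case by (auto simp: subdiv_path_def expand_def)
next
  case (Cons e es)
  then show ?case
    using is_path_subdiv_edge[OF wf]
    by (auto simp: is_path_Cons[OF wf] subdiv_path_def is_path_append[OF wf_expand[OF wf]])
qed

lemma path_word_subdiv_path: "path_word (expand Gr) (subdiv_path Gr es) = path_word Gr es"
  by (induction es) (simp_all add: subdiv_path_def path_word_subdiv_edge)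

lemma length_subdiv_path [simp]: "length (subdiv_path Gr es) = length (path_word Gr es)"
  by (metis length_path_word_expand path_word_subdiv_path)

lemma is_path_expand_finish_edge:
  assumes wf: "wf_lgraph Gr"
  shows "j < length (lab Gr e) \<Longrightarrow> is_path (expand Gr) x (Inl v) ((e, j) # q) \<Longrightarrow>
    \<exists>q'. (e, j) # q = map (Pair e) [j..<length (lab Gr e)] @ q' \<and>
         is_path (expand Gr) (Inl (tgt Gr e)) (Inl v) q'"
proof (induction q arbitrary: j x)
  case Nil
  then have "tgt (expand Gr) (e, j) = Inl v" "Inl v \<in> verts (expand Gr)"
    by (auto simp: is_path_Cons[OF wf_expand[OF wf]])
  then have "Suc j = length (lab Gr e)" "tgt Gr e = v"
    by (auto simp: expand_def split: if_splits)
  then show ?case using \<open>Inl v \<in> _\<close> by (intro exI[of _ "[]"]) (simp add: upt_conv_Cons)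
next
  case (Cons y q)
  have p: "is_path (expand Gr) (tgt (expand Gr) (e, j)) (Inl v) (y # q)"
    using Cons.prems by (simp add: is_path_Cons[OF wf_expand[OF wf]])
  show ?case
  proof (cases "Suc j = length (lab Gr e)")
    case True
    then show ?thesis
      using p by (intro exI[of _ "y # q"]) (simp add: upt_conv_Cons expand_def)
  next
    case False
    then have "tgt (expand Gr) (e, j) = Inr (e, Suc j)" by (simp add: expand_def)
    with p have "src (expand Gr) y = Inr (e, Suc j)"
      by (simp add: is_path_Cons[OF wf_expand[OF wf]])
    then have y: "y = (e, Suc j)"
      by (cases y) (simp add: expand_def split: if_splits)
    with Cons.IH[of "Suc j"] p False Cons.prems(1) show ?thesis
      by (auto simp: upt_conv_Cons)
  qed
qed

lemma is_path_expand_InlD: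
  assumes wf: "wf_lgraph Gr"
  shows "is_path (expand Gr) (Inl u) (Inl v) p \<Longrightarrow> \<exists>es. is_path Gr u v es \<and> p = subdiv_path Gr es"
proof (induction "length p" arbitrary: p u rule: less_induct)
  case less
  show ?case
  proof (cases p)
    case Nil
    then show ?thesis
      using less.prems by (intro exI[of _ "[]"]) (auto simp: subdiv_path_def expand_def)
  next
    case (Cons y q)
    obtain e j where y: "y = (e, j)" by force
    have "y \<in> edges (expand Gr)" "src (expand Gr) y = Inl u"
      using less.prems Cons by (auto simp: is_path_Cons[OF wf_expand[OF wf]])
    then have e: "e \<in> edges Gr" "j = 0" "src Gr e = u" "0 < length (lab Gr e)"
      using y by (auto simp: expand_def split: if_splits)
    then obtain q' where q': "p = subdiv_edge Gr e @ q'" "is_path (expand Gr) (Inl (tgt Gr e)) (Inl v) q'"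
      using is_path_expand_finish_edge[OF wf] less.prems Cons y unfolding subdiv_edge_def by blast
    then have "length q' < length p"
      using e by (simp add: subdiv_edge_def)
    with less.hyps q'(2) obtain es where "is_path Gr (tgt Gr e) v es" "q' = subdiv_path Gr es"
      by blast
    then show ?thesis
      using q' e by (intro exI[of _ "e # es"]) (auto simp: is_path_Cons[OF wf] subdiv_path_def)
  qed
qed

section \<open>Counting paths with the adjacency matrix\<close>

definition paths :: "('v, 'e, 'a) lgraph \<Rightarrow> nat \<Rightarrow> 'v \<Rightarrow> 'v \<Rightarrow> 'e list set" where
  "paths Gr k u v = {p. is_path Gr u v p \<and> length p = k}"

definition edges_between :: "('v, 'e, 'a) lgraph \<Rightarrow> 'v \<Rightarrow> 'v \<Rightarrow> 'e set" where
  "edges_between Gr u v = {e \<in> edges Gr. src Gr e = u \<and> tgt Gr e = v}"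

lemma paths_0: "paths Gr 0 u v = (if u \<in> verts Gr \<and> u = v then {[]} else {})"
  unfolding paths_def by auto

lemma finite_paths:
  assumes wf: "wf_lgraph Gr"
  shows "finite (paths Gr k u v)"
proof -
  have "paths Gr k u v \<subseteq> {xs. set xs \<subseteq> edges Gr \<and> length xs = k}"
    unfolding paths_def is_path_def by auto
  with wf show ?thesis
    using finite_lists_length_eq[of "edges Gr" k] unfolding wf_lgraph_def by (blast intro: finite_subset)
qed

lemma paths_Suc:
  assumes wf: "wf_lgraph Gr"
  shows "paths Gr (Suc k) u w =
    (\<Union>v\<in>verts Gr. (\<lambda>(p, e). p @ [e]) ` (paths Gr k u v \<times> edges_between Gr v w))"
proof (intro equalityI subsetI)
  fix p assume "p \<in> paths Gr (Suc k) u w"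
  then have p: "is_path Gr u w p" "length p = Suc k" unfolding paths_def by auto
  then obtain xs x where p_eq: "p = xs @ [x]" by (metis length_Suc_conv_rev)
  with p obtain v where "is_path Gr u v xs" "is_path Gr v w [x]"
    using is_path_append[OF wf] by blast
  then have "v \<in> verts Gr" "xs \<in> paths Gr k u v" "x \<in> edges_between Gr v w"
    using p p_eq by (auto simp: paths_def edges_between_def is_path_Cons[OF wf] dest: is_path_verts)
  then show "p \<in> (\<Union>v\<in>verts Gr. (\<lambda>(p, e). p @ [e]) ` (paths Gr k u v \<times> edges_between Gr v w))"
    unfolding p_eq by (intro UN_I[of v]) (auto intro!: image_eqI[of _ _ "(xs, x)"])
next
  fix p assume "p \<in> (\<Union>v\<in>verts Gr. (\<lambda>(p, e). p @ [e]) ` (paths Gr k u v \<times> edges_between Gr v w))"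
  then obtain v xs x where "p = xs @ [x]" "xs \<in> paths Gr k u v" "x \<in> edges_between Gr v w"
    by auto
  with wf show "p \<in> paths Gr (Suc k) u w"
    by (auto simp: paths_def edges_between_def is_path_append[OF wf] is_path_Cons[OF wf] wf_lgraph_def)
qed

lemma card_paths_Suc:
  assumes wf: "wf_lgraph Gr"
  shows "card (paths Gr (Suc k) u w) = (\<Sum>v\<in>verts Gr. card (paths Gr k u v) * card (edges_between Gr v w))"
proof -
  have fin: "finite (verts Gr)" "finite (edges Gr)" using wf unfolding wf_lgraph_def by auto
  have "card (paths Gr (Suc k) u w) =
      (\<Sum>v\<in>verts Gr. card ((\<lambda>(p, e). p @ [e]) ` (paths Gr k u v \<times> edges_between Gr v w)))"
    unfolding paths_Suc[OF wf]
  proof (rule card_UN_disjoint[OF fin(1)])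
    show "\<forall>v\<in>verts Gr. finite ((\<lambda>(p, e). p @ [e]) ` (paths Gr k u v \<times> edges_between Gr v w))"
      using finite_paths[OF wf] fin(2) by (auto simp: edges_between_def)
    show "\<forall>v\<in>verts Gr. \<forall>v'\<in>verts Gr. v \<noteq> v' \<longrightarrow>
      (\<lambda>(p, e). p @ [e]) ` (paths Gr k u v \<times> edges_between Gr v w) \<inter>
      (\<lambda>(p, e). p @ [e]) ` (paths Gr k u v' \<times> edges_between Gr v' w) = {}"
      by (auto simp: edges_between_def)
  qed
  also have "\<dots> = (\<Sum>v\<in>verts Gr. card (paths Gr k u v) * card (edges_between Gr v w))"
  proof (rule sum.cong[OF refl])
    fix v
    have "inj_on (\<lambda>(p, e). p @ [e]) (paths Gr k u v \<times> edges_between Gr v w)"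
      by (auto simp: inj_on_def)
    then show "card ((\<lambda>(p, e). p @ [e]) ` (paths Gr k u v \<times> edges_between Gr v w)) =
        card (paths Gr k u v) * card (edges_between Gr v w)"
      by (simp add: card_image card_cartesian_product)
  qed
  finally show ?thesis .
qed

lemma sum_set_distinct_nth:
  "distinct vs \<Longrightarrow> (\<Sum>v\<in>set vs. f v) = (\<Sum>i<length vs. f (vs ! i))"
  by (rule sum.reindex_bij_betw[OF bij_betw_nth[OF _ refl refl], symmetric])

lemma index_adj_mat_pow:
  assumes wf: "wf_lgraph Gr" and vs: "distinct vs" "set vs = verts Gr"
  shows "i < length vs \<Longrightarrow> j < length vs \<Longrightarrow>
    (adj_mat Gr vs ^\<^sub>m k) $$ (i, j) = of_nat (card (paths Gr k (vs ! i) (vs ! j)))"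
proof (induction k arbitrary: j)
  case 0
  then show ?case
    using vs by (auto simp: adj_mat_def paths_0 nth_eq_iff_index_eq)
next
  case (Suc k)
  let ?X = "adj_mat Gr vs"
  have "(?X ^\<^sub>m Suc k) $$ (i, j) = (\<Sum>m<length vs. (?X ^\<^sub>m k) $$ (i, m) * ?X $$ (m, j))"
    using Suc.prems by (simp add: adj_mat_def scalar_prod_def lessThan_atLeast0)
  also have "\<dots> = of_nat (\<Sum>m<length vs.
      card (paths Gr k (vs ! i) (vs ! m)) * card (edges_between Gr (vs ! m) (vs ! j)))"
    using Suc by (simp add: adj_mat_def edges_between_def)
  also have "\<dots> = of_nat (card (paths Gr (Suc k) (vs ! i) (vs ! j)))"
    using card_paths_Suc[OF wf] by (simp add: vs(2)[symmetric] sum_set_distinct_nth[OF vs(1)])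
  finally show ?case .
qed

lemma vertex_enumeration:
  assumes "finite (verts Gr)"
  obtains vs where "distinct vs" "set vs = verts Gr"
    "graph_spectral_radius Gr = spectral_radius (adj_mat Gr vs)"
proof -
  have "\<exists>vs. distinct vs \<and> set vs = verts Gr"
    using finite_distinct_list[OF assms] by auto
  then show ?thesis
    using that unfolding graph_spectral_radius_def by (metis (mono_tags, lifting) someI_ex)
qed

section \<open>Word counts and capacity\<close>

definition word_count :: "'a list set \<Rightarrow> nat \<Rightarrow> nat" where
  "word_count S n = card {w \<in> S. length w = n}"

lemma finite_words_of_length:
  assumes wf: "wf_lgraph Gr"
  shows "finite {w \<in> constrained_system Gr. length w = n}"
proof -
  have "{w \<in> constrained_system Gr. length w = n} \<subseteq>
      {w. set w \<subseteq> (\<Union>e\<in>edges Gr. set (lab Gr e)) \<and> length w = n}"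
    unfolding constrained_system_def path_word_def is_path_def by fastforce
  moreover have "finite (\<Union>e\<in>edges Gr. set (lab Gr e))"
    using wf unfolding wf_lgraph_def by auto
  ultimately show ?thesis
    using finite_lists_length_eq finite_subset by blast
qed

lemma word_count_le_card_paths_expand:
  assumes wf: "wf_lgraph Gr"
  shows "word_count (constrained_system Gr) n \<le>
    (\<Sum>u\<in>verts (expand Gr). \<Sum>v\<in>verts (expand Gr). card (paths (expand Gr) n u v))"
proof -
  let ?V = "verts (expand Gr)"
  let ?P = "\<Union>u\<in>?V. \<Union>v\<in>?V. paths (expand Gr) n u v"
  have fin: "finite ?V" using wf_expand[OF wf] unfolding wf_lgraph_def by auto
  have "{w \<in> constrained_system Gr. length w = n} \<subseteq> path_word (expand Gr) ` ?P"
  proof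
    fix w assume "w \<in> {w \<in> constrained_system Gr. length w = n}"
    then obtain es u v where w: "w = path_word Gr es" "length w = n" and es: "is_path Gr u v es"
      unfolding constrained_system_def by auto
    have sp: "is_path (expand Gr) (Inl u) (Inl v) (subdiv_path Gr es)"
      by (rule is_path_subdiv_path[OF wf es])
    have pw: "path_word (expand Gr) (subdiv_path Gr es) = w"
      using w(1) by (simp add: path_word_subdiv_path)
    then have "length (subdiv_path Gr es) = n"
      using w by simp
    with sp pw is_path_verts[OF sp] show "w \<in> path_word (expand Gr) ` ?P"
      unfolding paths_def by blast
  qed
  then have "word_count (constrained_system Gr) n \<le> card (path_word (expand Gr) ` ?P)"
    unfolding word_count_def using fin finite_paths[OF wf_expand[OF wf]]
    by (intro card_mono) auto
  also have "\<dots> \<le> card ?P"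
    using fin finite_paths[OF wf_expand[OF wf]] by (intro card_image_le) auto
  also have "\<dots> \<le> (\<Sum>u\<in>?V. \<Sum>v\<in>?V. card (paths (expand Gr) n u v))"
    using fin by (intro order_trans[OF card_UN_le] sum_mono card_UN_le) auto
  finally show ?thesis .
qed

lemma expand_path_from_Inl:
  assumes wf: "wf_lgraph Gr" and M: "\<And>e. e \<in> edges Gr \<Longrightarrow> length (lab Gr e) \<le> M"
    and u: "u \<in> verts (expand Gr)"
  shows "\<exists>x q. is_path (expand Gr) (Inl x) u q \<and> length q \<le> M"
proof (cases u)
  case (Inl x)
  then show ?thesis using u by (intro exI[of _ x] exI[of _ "[]"]) auto
next
  case (Inr ej)
  then obtain e j where ej: "u = Inr (e, j)" "e \<in> edges Gr" "1 \<le> j" "j < length (lab Gr e)"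
    using u unfolding expand_def by auto
  then have "subdiv_vertex Gr e 0 = Inl (src Gr e)" "subdiv_vertex Gr e j = u"
    by (auto simp: subdiv_vertex_def)
  then show ?thesis
    using is_path_expand_segment[OF wf ej(2), of 0 j] ej(4) M[OF ej(2)]
    by (intro exI[of _ "src Gr e"] exI[of _ "map (Pair e) [0..<j]"]) auto
qed

lemma expand_path_to_Inl:
  assumes wf: "wf_lgraph Gr" and M: "\<And>e. e \<in> edges Gr \<Longrightarrow> length (lab Gr e) \<le> M"
    and u: "u \<in> verts (expand Gr)"
  shows "\<exists>y q. is_path (expand Gr) u (Inl y) q \<and> length q \<le> M"
proof (cases u)
  case (Inl y)
  then show ?thesis using u by (intro exI[of _ y] exI[of _ "[]"]) auto
next
  case (Inr ej)
  then obtain e j where ej: "u = Inr (e, j)" "e \<in> edges Gr" "1 \<le> j" "j < length (lab Gr e)"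
    using u unfolding expand_def by auto
  then have "subdiv_vertex Gr e j = u" "subdiv_vertex Gr e (length (lab Gr e)) = Inl (tgt Gr e)"
    by (auto simp: subdiv_vertex_def)
  then show ?thesis
    using is_path_expand_segment[OF wf ej(2), of j "length (lab Gr e)"] ej(4) M[OF ej(2)]
    by (intro exI[of _ "tgt Gr e"] exI[of _ "map (Pair e) [j..<length (lab Gr e)]"]) auto
qed

text \<open>Paths of the expansion between original vertices are subdivided paths of \<open>Gr\<close>, so
  reading off their words is injective because \<open>Gr\<close> is lossless.\<close>
lemma card_paths_expand_Inl_le_word_count:
  assumes wf: "wf_lgraph Gr" and ll: "lossless Gr"
  shows "card (paths (expand Gr) k (Inl x) (Inl y)) \<le> word_count (constrained_system Gr) k"
  unfolding word_count_def
proof (rule card_inj_on_le)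
  have subdiv: "\<exists>es. is_path Gr x y es \<and> p = subdiv_path Gr es"
    if "p \<in> paths (expand Gr) k (Inl x) (Inl y)" for p
    using is_path_expand_InlD[OF wf] that unfolding paths_def by blast
  show "inj_on (path_word (expand Gr)) (paths (expand Gr) k (Inl x) (Inl y))"
  proof (rule inj_onI)
    fix p1 p2
    assume "p1 \<in> paths (expand Gr) k (Inl x) (Inl y)" "p2 \<in> paths (expand Gr) k (Inl x) (Inl y)"
      and eq: "path_word (expand Gr) p1 = path_word (expand Gr) p2"
    then obtain es1 es2 where es1: "is_path Gr x y es1" "p1 = subdiv_path Gr es1"
      and es2: "is_path Gr x y es2" "p2 = subdiv_path Gr es2"
      using subdiv by meson
    with eq have "path_word Gr es1 = path_word Gr es2"
      by (simp add: path_word_subdiv_path)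
    with ll es1(1) es2(1) have "es1 = es2"
      unfolding lossless_def by blast
    with es1(2) es2(2) show "p1 = p2" by simp
  qed
  show "path_word (expand Gr) ` paths (expand Gr) k (Inl x) (Inl y) \<subseteq>
      {w \<in> constrained_system Gr. length w = k}"
  proof
    fix w assume "w \<in> path_word (expand Gr) ` paths (expand Gr) k (Inl x) (Inl y)"
    then obtain p where p: "p \<in> paths (expand Gr) k (Inl x) (Inl y)" "w = path_word (expand Gr) p"
      by blast
    moreover obtain es where es: "is_path Gr x y es" "p = subdiv_path Gr es"
      using subdiv[OF p(1)] by blast
    ultimately have "w = path_word Gr es" "length w = k"
      unfolding paths_def by (auto simp: path_word_subdiv_path)
    with es(1) show "w \<in> {w \<in> constrained_system Gr. length w = k}"
      unfolding constrained_system_def by auto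
  qed
qed (rule finite_words_of_length[OF wf])

lemma card_paths_expand_le_word_count:
  assumes wf: "wf_lgraph Gr" and ll: "lossless Gr"
    and M: "\<And>e. e \<in> edges Gr \<Longrightarrow> length (lab Gr e) \<le> M"
    and u: "u \<in> verts (expand Gr)" and v: "v \<in> verts (expand Gr)"
  shows "\<exists>k. n \<le> k \<and> k \<le> n + 2 * M \<and> card (paths (expand Gr) n u v) \<le> word_count (constrained_system Gr) k"
proof -
  have wf': "wf_lgraph (expand Gr)" by (rule wf_expand[OF wf])
  obtain x q1 where q1: "is_path (expand Gr) (Inl x) u q1" "length q1 \<le> M"
    using expand_path_from_Inl[OF wf M u] by auto
  obtain y q2 where q2: "is_path (expand Gr) v (Inl y) q2" "length q2 \<le> M"
    using expand_path_to_Inl[OF wf M v] by auto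
  define k where "k = length q1 + n + length q2"
  have "card (paths (expand Gr) n u v) \<le> card (paths (expand Gr) k (Inl x) (Inl y))"
  proof (rule card_inj_on_le)
    show "inj_on (\<lambda>p. q1 @ p @ q2) (paths (expand Gr) n u v)" by (auto simp: inj_on_def)
    show "(\<lambda>p. q1 @ p @ q2) ` paths (expand Gr) n u v \<subseteq> paths (expand Gr) k (Inl x) (Inl y)"
    proof
      fix p' assume "p' \<in> (\<lambda>p. q1 @ p @ q2) ` paths (expand Gr) n u v"
      then obtain p where p: "p' = q1 @ p @ q2" "is_path (expand Gr) u v p" "length p = n"
        unfolding paths_def by auto
      then have "is_path (expand Gr) (Inl x) (Inl y) (q1 @ p @ q2)"
        using q1(1) q2(1) is_path_append[OF wf'] by blast
      with p show "p' \<in> paths (expand Gr) k (Inl x) (Inl y)"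
        unfolding paths_def k_def by simp
    qed
  qed (rule finite_paths[OF wf'])
  also have "\<dots> \<le> word_count (constrained_system Gr) k"
    by (rule card_paths_expand_Inl_le_word_count[OF wf ll])
  finally have "card (paths (expand Gr) n u v) \<le> word_count (constrained_system Gr) k" .
  moreover have "n \<le> k" "k \<le> n + 2 * M" using q1(2) q2(2) unfolding k_def by auto
  ultimately show ?thesis by blast
qed

lemma capacity_word_count:
  "capacity S = limsup (\<lambda>n. if word_count S n = 0 then -\<infinity>
                            else ereal (log 2 (real (word_count S n)) / real n))"
  unfolding capacity_def word_count_def Let_def ..

lemma growth_base_ge_1:
  fixes c :: "nat \<Rightarrow> nat" and \<rho> :: real
  assumes upper: "\<And>r. \<rho> < r \<Longrightarrow> \<exists>C. \<forall>n. real (c n) \<le> C * r ^ n"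
    and unbounded: "\<And>m. \<exists>n\<ge>m. c n \<noteq> 0"
  shows "1 \<le> \<rho>"
proof (rule ccontr)
  assume "\<not> 1 \<le> \<rho>"
  define r where "r = max ((1 + \<rho>) / 2) (1 / 2)"
  have r: "\<rho> < r" "0 < r" "r < 1"
    using \<open>\<not> 1 \<le> \<rho>\<close> unfolding r_def by (auto simp: less_max_iff_disj max_less_iff_conj)
  obtain C where C: "\<And>n. real (c n) \<le> C * r ^ n" using upper[OF r(1)] by auto
  have "(\<lambda>n. C * r ^ n) \<longlonglongrightarrow> C * 0"
    using r by (intro tendsto_mult tendsto_const LIMSEQ_power_zero) auto
  then have "eventually (\<lambda>n. C * r ^ n < 1) sequentially"
    by (intro order_tendstoD) auto
  then obtain m where m: "\<And>n. m \<le> n \<Longrightarrow> C * r ^ n < 1"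
    unfolding eventually_sequentially by auto
  obtain n where n: "m \<le> n" "c n \<noteq> 0" using unbounded by blast
  have "real (c n) < 1" using C[of n] m[OF n(1)] by linarith
  with n(2) show False by simp
qed

lemma log_div_le_of_le_mult_pow:
  fixes x C r :: real
  assumes x: "0 < x" "x \<le> C * r ^ n" and C: "0 < C" and r: "0 < r" and n: "0 < n"
  shows "log 2 x / n \<le> log 2 C / n + log 2 r"
proof -
  have "log 2 x \<le> log 2 (C * r ^ n)"
    using x C r by (subst log_le_cancel_iff) auto
  also have "\<dots> = log 2 C + n * log 2 r"
    using C r by (simp add: log_mult log_nat_power)
  finally show ?thesis
    using n by (simp add: field_simps)
qed

lemma log_div_ge_of_pow_le_mult:
  fixes \<rho> K x :: real
  assumes \<rho>: "1 \<le> \<rho>" and K: "0 < K" and x: "0 < x" "\<rho> ^ n \<le> K * x"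
    and k: "n \<le> k" "k \<le> n + D" "0 < k"
  shows "log 2 \<rho> - (real D * log 2 \<rho> + log 2 K) / real k \<le> log 2 x / real k"
proof -
  have "n * log 2 \<rho> - log 2 K = log 2 (\<rho> ^ n / K)"
    using \<rho> K by (simp add: log_divide log_nat_power)
  also have "\<dots> \<le> log 2 x"
    using \<rho> K x by (subst log_le_cancel_iff) (auto simp: field_simps)
  finally have "n * log 2 \<rho> - log 2 K \<le> log 2 x" .
  moreover have "(real k - D) * log 2 \<rho> \<le> n * log 2 \<rho>"
    using k(2) \<rho> by (intro mult_right_mono) auto
  ultimately have "real k * log 2 \<rho> - (real D * log 2 \<rho> + log 2 K) \<le> log 2 x"
    by (simp add: algebra_simps)
  then have "(real k * log 2 \<rho> - (real D * log 2 \<rho> + log 2 K)) / real k \<le> log 2 x / real k"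
    by (intro divide_right_mono) auto
  then show ?thesis
    using k(3) by (simp add: diff_divide_distrib)
qed

lemma capacity_le_log:
  assumes upper: "\<And>r. \<rho> < r \<Longrightarrow> \<exists>C. \<forall>n. real (word_count S n) \<le> C * r ^ n"
    and \<rho>: "1 \<le> \<rho>"
  shows "capacity S \<le> ereal (log 2 \<rho>)"
proof (rule ereal_le_epsilon2)
  fix e :: real assume e: "0 < e"
  define r where "r = \<rho> * 2 powr (e / 2)"
  have "1 < 2 powr (e / 2)" using e by simp
  then have r: "\<rho> < r" "0 < r" unfolding r_def using \<rho> by auto
  have log_r: "log 2 r = log 2 \<rho> + e / 2" unfolding r_def using \<rho> by (simp add: log_mult)
  obtain C0 where C0: "\<And>n. real (word_count S n) \<le> C0 * r ^ n" using upper[OF r(1)] by auto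
  define C where "C = max C0 1"
  have C_pos: "0 < C" unfolding C_def by simp
  have C: "real (word_count S n) \<le> C * r ^ n" for n
  proof -
    have "C0 * r ^ n \<le> C * r ^ n" unfolding C_def using r(2) by (intro mult_right_mono) auto
    then show ?thesis using C0[of n] by linarith
  qed
  have "(\<lambda>n. log 2 C / real n) \<longlonglongrightarrow> 0" by (rule lim_const_over_n)
  then have "eventually (\<lambda>n. log 2 C / real n < e / 2) sequentially"
    using e by (intro order_tendstoD) auto
  then obtain m where m: "\<And>n. m \<le> n \<Longrightarrow> log 2 C / real n < e / 2"
    unfolding eventually_sequentially by auto
  have bound: "(if word_count S n = 0 then -\<infinity> else ereal (log 2 (real (word_count S n)) / real n))
      \<le> ereal (log 2 \<rho> + e)" if n: "max m 1 \<le> n" for n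
  proof (cases "word_count S n = 0")
    case False
    then have "0 < real (word_count S n)" "0 < n" using n by auto
    then have "log 2 (real (word_count S n)) / n \<le> log 2 C / n + log 2 r"
      using log_div_le_of_le_mult_pow C[of n] C_pos r(2) by blast
    moreover have "log 2 C / n < e / 2" by (rule m) (use n in simp)
    ultimately have "log 2 (real (word_count S n)) / n \<le> log 2 \<rho> + e"
      using log_r by linarith
    then show ?thesis using False by simp
  qed simp
  then have "eventually (\<lambda>n. (if word_count S n = 0 then -\<infinity>
      else ereal (log 2 (real (word_count S n)) / real n)) \<le> ereal (log 2 \<rho> + e)) sequentially"
    unfolding eventually_sequentially by blast
  then show "capacity S \<le> ereal (log 2 \<rho>) + ereal e"
    unfolding capacity_word_count by (simp add: Limsup_bounded)
qed

lemma capacity_ge_log: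
  assumes lower: "\<And>n. \<exists>k. n \<le> k \<and> k \<le> n + D \<and> \<rho> ^ n \<le> K * real (word_count S k)"
    and \<rho>: "1 \<le> \<rho>"
  shows "ereal (log 2 \<rho>) \<le> capacity S"
proof (rule ereal_le_epsilon2)
  fix e :: real assume e: "0 < e"
  obtain k0 where "1 \<le> K * real (word_count S k0)" using lower[of 0] by auto
  then have "0 < K * real (word_count S k0)" by linarith
  then have K: "0 < K" by (auto simp: zero_less_mult_iff)
  define B where "B = real D * log 2 \<rho> + log 2 K"
  have "ereal (log 2 \<rho> - e) \<le> (SUP m\<in>{n0..}. if word_count S m = 0 then -\<infinity>
      else ereal (log 2 (real (word_count S m)) / real m))" for n0
  proof -
    define n where "n = max n0 (max (nat \<lceil>B / e\<rceil>) 1)"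
    have n: "n0 \<le> n" "B / e \<le> real n" "1 \<le> n"
      unfolding n_def by linarith+
    obtain k where k: "n \<le> k" "k \<le> n + D" "\<rho> ^ n \<le> K * real (word_count S k)"
      using lower by blast
    have k_pos: "0 < k" using n(3) k(1) by simp
    have "0 < \<rho> ^ n" using \<rho> by simp
    then have "0 < K * real (word_count S k)" using k(3) by linarith
    then have wk: "0 < real (word_count S k)" using K by (simp add: zero_less_mult_iff)
    have "B \<le> real n * e" using n(2) e by (simp add: field_simps)
    also have "\<dots> \<le> real k * e" using k(1) e by (intro mult_right_mono) auto
    finally have "B / real k \<le> e" using k_pos by (simp add: field_simps)
    moreover have "log 2 \<rho> - B / real k \<le> log 2 (real (word_count S k)) / real k"
      unfolding B_def by (rule log_div_ge_of_pow_le_mult[OF \<rho> K wk k(3) k(1) k(2) k_pos])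
    ultimately have "log 2 \<rho> - e \<le> log 2 (real (word_count S k)) / real k" by linarith
    then show ?thesis
      using n(1) k(1) wk by (intro SUP_upper2[of k]) auto
  qed
  then have "ereal (log 2 \<rho> - e) \<le> capacity S"
    unfolding capacity_word_count limsup_INF_SUP by (rule INF_greatest)
  then have "ereal (log 2 \<rho> - e) + ereal e \<le> capacity S + ereal e" by (rule add_right_mono)
  then show "ereal (log 2 \<rho>) \<le> capacity S + ereal e" by simp
qed

lemma word_count_le_exp:
  assumes wf: "wf_lgraph Gr" and r: "graph_spectral_radius (expand Gr) < r"
  shows "\<exists>C. \<forall>n. real (word_count (constrained_system Gr) n) \<le> C * r ^ n"
proof -
  let ?G = "expand Gr"
  have wf': "wf_lgraph ?G" by (rule wf_expand[OF wf])
  then have "finite (verts ?G)" unfolding wf_lgraph_def by simp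
  then obtain vs where vs: "distinct vs" "set vs = verts ?G"
    and \<rho>: "graph_spectral_radius ?G = spectral_radius (adj_mat ?G vs)"
    by (rule vertex_enumeration)
  define X where "X = adj_mat ?G vs"
  define N where "N = length vs"
  have X: "X \<in> carrier_mat N N" unfolding X_def N_def adj_mat_def by simp
  obtain c where c: "\<And>k. norm_bound (X ^\<^sub>m k) (c * r ^ k)"
    using spectral_radius_pow_norm_bound[OF X] r \<rho> unfolding X_def by auto
  have "real (word_count (constrained_system Gr) n) \<le> N * N * c * r ^ n" for n
  proof -
    have "word_count (constrained_system Gr) n \<le> (\<Sum>i<N. \<Sum>j<N. card (paths ?G n (vs ! i) (vs ! j)))"
      using word_count_le_card_paths_expand[OF wf, of n]
      unfolding N_def vs(2)[symmetric] sum_set_distinct_nth[OF vs(1)] .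
    then have "real (word_count (constrained_system Gr) n) \<le>
        (\<Sum>i<N. \<Sum>j<N. real (card (paths ?G n (vs ! i) (vs ! j))))"
      by (simp only: of_nat_sum[symmetric] of_nat_le_iff)
    also have "\<dots> = (\<Sum>i<N. \<Sum>j<N. norm ((X ^\<^sub>m n) $$ (i, j)))"
      using index_adj_mat_pow[OF wf' vs] unfolding X_def N_def by simp
    also have "\<dots> \<le> (\<Sum>i<N. \<Sum>j<N. c * r ^ n)"
      using c[of n] X by (intro sum_mono) (auto simp: norm_bound_def)
    finally show ?thesis by simp
  qed
  then show ?thesis by blast
qed

lemma spectral_radius_pow_le_word_count:
  assumes wf: "wf_lgraph Gr" and ll: "lossless Gr"
    and M: "\<And>e. e \<in> edges Gr \<Longrightarrow> length (lab Gr e) \<le> M" and ne: "verts Gr \<noteq> {}"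
  shows "\<exists>k. n \<le> k \<and> k \<le> n + 2 * M \<and>
    graph_spectral_radius (expand Gr) ^ n \<le>
      real (card (verts (expand Gr))) * real (word_count (constrained_system Gr) k)"
proof -
  let ?G = "expand Gr"
  let ?c = "word_count (constrained_system Gr)"
  have wf': "wf_lgraph ?G" by (rule wf_expand[OF wf])
  then have "finite (verts ?G)" unfolding wf_lgraph_def by simp
  then obtain vs where vs: "distinct vs" "set vs = verts ?G"
    and \<rho>: "graph_spectral_radius ?G = spectral_radius (adj_mat ?G vs)"
    by (rule vertex_enumeration)
  define X where "X = adj_mat ?G vs"
  define N where "N = length vs"
  have X: "X \<in> carrier_mat N N" unfolding X_def N_def adj_mat_def by simp
  have card_V: "card (verts ?G) = N"
    using distinct_card[OF vs(1)] vs(2) unfolding N_def by simp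
  obtain v where "v \<in> verts Gr" using ne by auto
  then have "Inl v \<in> verts ?G" by (simp add: expand_def)
  then have N: "0 < N" using vs(2) unfolding N_def by (cases vs) auto
  obtain i where i: "i < N" "\<And>k. spectral_radius X ^ k \<le> (\<Sum>j<N. norm ((X ^\<^sub>m k) $$ (i, j)))"
    using spectral_radius_pow_le_row_sum[OF X N] by auto
  let ?p = "\<lambda>j. card (paths ?G n (vs ! i) (vs ! j))"
  have "finite (?p ` {..<N})" "?p ` {..<N} \<noteq> {}" using N by auto
  from Max_in[OF this] obtain j0 where j0: "j0 < N" "?p j0 = Max (?p ` {..<N})" by auto
  have ij0: "vs ! i \<in> verts ?G" "vs ! j0 \<in> verts ?G"
    unfolding vs(2)[symmetric] using i(1) j0(1) unfolding N_def by simp_all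
  obtain k where k: "n \<le> k" "k \<le> n + 2 * M" "?p j0 \<le> ?c k"
    using card_paths_expand_le_word_count[OF wf ll M ij0] by auto
  have "graph_spectral_radius ?G ^ n \<le> (\<Sum>j<N. norm ((X ^\<^sub>m n) $$ (i, j)))"
    unfolding \<rho> X_def[symmetric] by (rule i(2))
  also have "\<dots> = (\<Sum>j<N. real (?p j))"
    using index_adj_mat_pow[OF wf' vs] i(1) unfolding X_def N_def by simp
  also have "\<dots> \<le> (\<Sum>j<N. real (?p j0))"
    by (intro sum_mono) (simp add: j0(2))
  also have "\<dots> = real (card (verts ?G)) * real (?p j0)" using card_V by simp
  also have "\<dots> \<le> real (card (verts ?G)) * real (?c k)"
    using k(3) by (intro mult_left_mono) auto
  finally show ?thesis using k(1,2) by (intro exI[of _ k] conjI)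
qed

lemma word_count_unbounded_if_cycle:
  assumes wf: "wf_lgraph Gr" and cycle: "is_path Gr v v es" "es \<noteq> []"
  shows "\<exists>n\<ge>m. word_count (constrained_system Gr) n \<noteq> 0"
proof -
  define p where "p = concat (replicate m es)"
  have p: "is_path Gr v v p" unfolding p_def
  proof (induction m)
    case 0
    then show ?case using is_path_verts[OF cycle(1)] by simp
  next
    case (Suc m)
    then have "is_path Gr v v (es @ concat (replicate m es))"
      using cycle(1) is_path_append[OF wf] by blast
    then show ?case by simp
  qed
  have "length p = m * length es" unfolding p_def by (induction m) auto
  then have "m \<le> length p" using cycle(2) by (cases es) auto
  also have "\<dots> \<le> length (path_word Gr p)"
    using length_path_word_ge[OF wf] p unfolding is_path_def by simp
  finally have "m \<le> length (path_word Gr p)" .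
  moreover have "path_word Gr p \<in> {w \<in> constrained_system Gr. length w = length (path_word Gr p)}"
    using p unfolding constrained_system_def by auto
  then have "word_count (constrained_system Gr) (length (path_word Gr p)) \<noteq> 0"
    unfolding word_count_def using finite_words_of_length[OF wf] by (auto simp: card_eq_0_iff)
  ultimately show ?thesis by blast
qed

theorem capacity_eq_log_spectral_radius_expand:
  assumes wf: "wf_lgraph Gr" and ll: "lossless Gr"
    and M: "\<And>e. e \<in> edges Gr \<Longrightarrow> length (lab Gr e) \<le> M"
    and unbounded: "\<And>m. \<exists>n\<ge>m. word_count (constrained_system Gr) n \<noteq> 0"
  shows "capacity (constrained_system Gr) = ereal (log 2 (graph_spectral_radius (expand Gr)))"
proof -
  let ?\<rho> = "graph_spectral_radius (expand Gr)"
  have upper: "\<And>r. ?\<rho> < r \<Longrightarrow> \<exists>C. \<forall>n. real (word_count (constrained_system Gr) n) \<le> C * r ^ n"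
    by (rule word_count_le_exp[OF wf])
  obtain n where "word_count (constrained_system Gr) n \<noteq> 0" using unbounded by blast
  then have "{w \<in> constrained_system Gr. length w = n} \<noteq> {}"
    unfolding word_count_def by (auto simp: card_eq_0_iff)
  then obtain es u v where "is_path Gr u v es"
    unfolding constrained_system_def by blast
  then have "verts Gr \<noteq> {}" by (auto dest: is_path_verts)
  then have lower: "\<And>n. \<exists>k. n \<le> k \<and> k \<le> n + 2 * M \<and>
      ?\<rho> ^ n \<le> real (card (verts (expand Gr))) * real (word_count (constrained_system Gr) k)"
    using spectral_radius_pow_le_word_count[OF wf ll M] by blast
  have "1 \<le> ?\<rho>" by (rule growth_base_ge_1[OF upper unbounded])
  show ?thesis
  proof (rule antisym)
    show "capacity (constrained_system Gr) \<le> ereal (log 2 ?\<rho>)"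
      by (rule capacity_le_log[OF upper \<open>1 \<le> ?\<rho>\<close>])
    show "ereal (log 2 ?\<rho>) \<le> capacity (constrained_system Gr)"
      by (rule capacity_ge_log[OF lower \<open>1 \<le> ?\<rho>\<close>])
  qed
qed

section \<open>The DNA graph\<close>

lemma takeWhile_replicate_append:
  "w = [] \<or> hd w \<noteq> a \<Longrightarrow> takeWhile (\<lambda>x. x = a) (replicate n a @ w) = replicate n a"
  by (induction n) (cases w; auto)+

lemma finite_UNIV_dna: "finite (UNIV :: dna set)"
proof -
  have UNIV_eq: "(UNIV :: dna set) = {A, C, G, T}" using dna.exhaust by auto
  show ?thesis by (subst UNIV_eq) simp
qed

lemma dna_graph_simps [simp]:
  "verts (dna_graph l t) = UNIV"
  "e \<in> edges (dna_graph l t) \<longleftrightarrow> (\<exists>b a i. e = (b, a, i) \<and> a \<noteq> b \<and> 1 \<le> i \<and> i \<le> l)"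
  "src (dna_graph l t) (b, a, i) = b"
  "tgt (dna_graph l t) (b, a, i) = a"
  "lab (dna_graph l t) (b, a, i) = replicate (t b a i) a"
  by (auto simp: dna_graph_def)

context
  fixes l :: nat and t :: "dna \<Rightarrow> dna \<Rightarrow> nat \<Rightarrow> nat"
  assumes t_pos: "\<And>a b i. a \<noteq> b \<Longrightarrow> 1 \<le> i \<Longrightarrow> i \<le> l \<Longrightarrow> 1 \<le> t b a i"
begin

lemma wf_dna_graph: "wf_lgraph (dna_graph l t)"
proof -
  have "edges (dna_graph l t) \<subseteq> UNIV \<times> UNIV \<times> {1..l}" by auto
  then have "finite (edges (dna_graph l t))"
    by (rule finite_subset) (simp add: finite_UNIV_dna)
  moreover have "lab (dna_graph l t) e \<noteq> []" if "e \<in> edges (dna_graph l t)" for e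
    using that t_pos by fastforce
  ultimately show ?thesis unfolding wf_lgraph_def by (simp add: finite_UNIV_dna)
qed

lemma hd_path_word_dna_graph:
  assumes "is_path (dna_graph l t) v x es"
  shows "path_word (dna_graph l t) es = [] \<or> hd (path_word (dna_graph l t) es) \<noteq> v"
proof (cases es)
  case (Cons e es')
  with assms obtain a i where "e = (v, a, i)" "a \<noteq> v" "1 \<le> i" "i \<le> l"
    by (auto simp: is_path_Cons[OF wf_dna_graph])
  with Cons t_pos[of a v i] show ?thesis
    by (cases "t v a i") auto
qed simp

lemma dna_graph_first_edge_unique:
  assumes t_mono: "\<And>a b i j. a \<noteq> b \<Longrightarrow> 1 \<le> i \<Longrightarrow> i < j \<Longrightarrow> j \<le> l \<Longrightarrow> t b a i < t b a j"
    and p1: "is_path (dna_graph l t) v x (e1 # es1)" and p2: "is_path (dna_graph l t) v y (e2 # es2)"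
    and w: "path_word (dna_graph l t) (e1 # es1) = path_word (dna_graph l t) (e2 # es2)"
  shows "e1 = e2"
proof -
  let ?G = "dna_graph l t"
  obtain a1 i1 where e1: "e1 = (v, a1, i1)" "a1 \<noteq> v" "1 \<le> i1" "i1 \<le> l"
    and es1: "is_path ?G a1 x es1"
    using p1 by (auto simp: is_path_Cons[OF wf_dna_graph])
  obtain a2 i2 where e2: "e2 = (v, a2, i2)" "a2 \<noteq> v" "1 \<le> i2" "i2 \<le> l"
    and es2: "is_path ?G a2 y es2"
    using p2 by (auto simp: is_path_Cons[OF wf_dna_graph])
  have w': "replicate (t v a1 i1) a1 @ path_word ?G es1 = replicate (t v a2 i2) a2 @ path_word ?G es2"
    using w e1 e2 by simp
  have a: "a1 = a2"
    using w' t_pos[OF e1(2-4)] t_pos[OF e2(2-4)]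
    by (cases "t v a1 i1"; cases "t v a2 i2") auto
  have "replicate (t v a1 i1) a1 = replicate (t v a2 i2) a1"
    using arg_cong[OF w', of "takeWhile (\<lambda>x. x = a1)"] a
      takeWhile_replicate_append[OF hd_path_word_dna_graph[OF es1]]
      takeWhile_replicate_append[OF hd_path_word_dna_graph[OF es2]]
    by simp
  then have "t v a1 i1 = t v a1 i2" using a by simp
  then have "i1 = i2"
    using t_mono[OF e1(2) e1(3), of i2] t_mono[OF e1(2) e2(3), of i1] e1(4) e2(4)
    by (cases i1 i2 rule: linorder_cases) auto
  with a e1 e2 show ?thesis by simp
qed

end

theorem lemma1:
  fixes l M :: nat and t :: "dna \<Rightarrow> dna \<Rightarrow> nat \<Rightarrow> nat"
  assumes "l \<ge> 1" and "M \<ge> 1"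
    and "\<And>a b i. a \<noteq> b \<Longrightarrow> 1 \<le> i \<Longrightarrow> i \<le> l \<Longrightarrow> 1 \<le> t b a i \<and> t b a i \<le> M"
    and "\<And>a b i j. a \<noteq> b \<Longrightarrow> 1 \<le> i \<Longrightarrow> i < j \<Longrightarrow> j \<le> l \<Longrightarrow> t b a i < t b a j"
  shows "lossless (dna_graph l t) \<and>
         capacity (constrained_system (dna_graph l t)) =
           ereal (log 2 (graph_spectral_radius (expand (dna_graph l t))))"
proof -
  let ?G = "dna_graph l t"
  have t_pos: "\<And>a b i. a \<noteq> b \<Longrightarrow> 1 \<le> i \<Longrightarrow> i \<le> l \<Longrightarrow> 1 \<le> t b a i"
    using assms(3) by blast
  have wf: "wf_lgraph ?G" by (rule wf_dna_graph[OF t_pos])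
  have ll: "lossless ?G"
    by (rule losslessI[OF wf dna_graph_first_edge_unique[OF t_pos assms(4)]])
  have M: "\<And>e. e \<in> edges ?G \<Longrightarrow> length (lab ?G e) \<le> M"
    using assms(3) by auto
  have "is_path ?G A A [(A, C, 1), (C, A, 1)]"
    using assms(1) by (simp add: is_path_Cons[OF wf])
  then have unbounded: "\<And>m. \<exists>n\<ge>m. word_count (constrained_system ?G) n \<noteq> 0"
    using word_count_unbounded_if_cycle[OF wf] by simp
  show ?thesis
    using ll capacity_eq_log_spectral_radius_expand[OF wf ll M unbounded] by simp
qed

end
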